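(* Let $p \ge 1$ be an integer. The functions $\overline{\Delta}_{\mathrm{JML1}}$ and $\overline{\Delta}_{\mathrm{JML2}}$ (defined below) are both metrics on $[0,1]^p$. Neither $\overline{\Delta}_{\mathrm{SJL},L^1}$ nor $\overline{\Delta}_{\mathrm{SJL},L^2}$ (defined below) is a metric on $[0,1]^p$.
   Context: For $x,y \in [0,1]^p$ write $\|x\|_1=\sum_{i=1}^p |x_i|$, $\|x\|_2^2=\sum_{i=1}^p x_i^2$ and $\langle x,y\rangle=\sum_{i=1}^p x_iy_i$. Define, for $x,y\in[0,1]^p$: $\overline{\Delta}_{\mathrm{JML1}}(x,y) = 1 - \frac{\|x\|_1+\|y\|_1-\|x-y\|_1}{\|x\|_1+\|y\|_1+\|x-y\|_1}$, $\overline{\Delta}_{\mathrm{JML2}}(x,y) = 1 - \frac{\langle x,y\rangle}{\langle x,y\rangle+\|x-y\|_1}$, $\overline{\Delta}_{\mathrm{SJL},L^1}(x,y) = 1 - \frac{\langle x,y\rangle}{\|x\|_1+\|y\|_1-\langle x,y\rangle}$, $\overline{\Delta}_{\mathrm{SJL},L^2}(x,y) = 1 - \frac{\langle x,y\rangle}{\|x\|_2^2+\|y\|_2^2-\langle x,y\rangle}$. All these denominators vanish only when $x=y=0$; by convention each of these functions takes the value $0$ at $(x,y)=(0,0)$. A mapping $f: M\times M\to\mathbb{R}$ is a metric on $M$ if for all $a,b,c\in M$: $f(a,a)=0$; $a\neq b \Rightarrow f(a,b)>0$; $f(a,b)=f(b,a)$; and $f(a,c)\le f(a,b)+f(b,c)$.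 *)

theory Defs
  imports "HOL-Analysis.Analysis"
begin

text \<open>Points of [0,1]^p are modelled as vectors of type real^'n with a finite
index type 'n of cardinality p (every type is nonempty, so p >= 1).\<close>

definition unit_cube :: "(real ^ 'n) set" where
  "unit_cube = {x. \<forall>i. 0 \<le> x $ i \<and> x $ i \<le> 1}"

definition norm1 :: "real ^ 'n \<Rightarrow> real" where
  "norm1 x = (\<Sum>i\<in>UNIV. \<bar>x $ i\<bar>)"

definition sqnorm2 :: "real ^ 'n \<Rightarrow> real" where
  "sqnorm2 x = (\<Sum>i\<in>UNIV. (x $ i)^2)"

definition ip :: "real ^ 'n \<Rightarrow> real ^ 'n \<Rightarrow> real" where
  "ip x y = (\<Sum>i\<in>UNIV. x $ i * y $ i)"

definition dJML1 :: "real ^ 'n \<Rightarrow> real ^ 'n \<Rightarrow> real" where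
  "dJML1 x y = (if x = 0 \<and> y = 0 then 0 else
     1 - (norm1 x + norm1 y - norm1 (x - y)) / (norm1 x + norm1 y + norm1 (x - y)))"

definition dJML2 :: "real ^ 'n \<Rightarrow> real ^ 'n \<Rightarrow> real" where
  "dJML2 x y = (if x = 0 \<and> y = 0 then 0 else
     1 - ip x y / (ip x y + norm1 (x - y)))"

definition dSJL1 :: "real ^ 'n \<Rightarrow> real ^ 'n \<Rightarrow> real" where
  "dSJL1 x y = (if x = 0 \<and> y = 0 then 0 else
     1 - ip x y / (norm1 x + norm1 y - ip x y))"

definition dSJL2 :: "real ^ 'n \<Rightarrow> real ^ 'n \<Rightarrow> real" where
  "dSJL2 x y = (if x = 0 \<and> y = 0 then 0 else
     1 - ip x y / (sqnorm2 x + sqnorm2 y - ip x y))"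

definition is_metric_on :: "'a set \<Rightarrow> ('a \<Rightarrow> 'a \<Rightarrow> real) \<Rightarrow> bool" where
  "is_metric_on M f \<longleftrightarrow>
     (\<forall>a\<in>M. f a a = 0) \<and>
     (\<forall>a\<in>M. \<forall>b\<in>M. a \<noteq> b \<longrightarrow> f a b > 0) \<and>
     (\<forall>a\<in>M. \<forall>b\<in>M. f a b = f b a) \<and>
     (\<forall>a\<in>M. \<forall>b\<in>M. \<forall>c\<in>M. f a c \<le> f a b + f b c)"

end

theory Submission
  imports Defs
begin

text \<open>On the unit cube both JML distances have the form \<open>d / (d + s)\<close>, where \<open>d\<close> is the
\<open>L\<^sup>1\<close> distance and the similarity \<open>s\<close> is \<open>\<Sum>i. min (x i) (y i)\<close> resp. \<open>\<langle>x, y\<rangle>\<close>.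
Such a quotient is a metric whenever \<open>s\<close> is nonnegative, symmetric and 1-Lipschitz with
respect to \<open>d\<close>: the triangle inequality then follows from the monotonicity of
\<open>t \<mapsto> t / (t + r)\<close>. The SJL dissimilarities fail already on constant vectors, where they
do not depend on the dimension: the \<open>L\<^sup>1\<close> version gives \<open>\<Delta>(x, x) = 2/3\<close> for \<open>x = (1/2, \<dots>, 1/2)\<close>,
and on the constant vectors \<open>1/2, 1/4, 1/8\<close> the \<open>L\<^sup>2\<close> version violates the triangle inequality,
\<open>9/13 > 1/3 + 1/3\<close>.\<close>

lemma is_metric_on_cong:
  assumes "\<And>x y. x \<in> M \<Longrightarrow> y \<in> M \<Longrightarrow> f x y = g x y"
  shows "is_metric_on M f \<longleftrightarrow> is_metric_on M g"
  using assms unfolding is_metric_on_def by simp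

lemma is_metric_on_nonneg:
  assumes "is_metric_on M d" "x \<in> M" "y \<in> M"
  shows "0 \<le> d x y"
proof -
  have "d x x \<le> d x y + d y x"
    using assms unfolding is_metric_on_def by blast
  moreover have "d x x = 0" "d x y = d y x"
    using assms unfolding is_metric_on_def by simp_all
  ultimately show ?thesis by linarith
qed

lemma divide_add_mono_left:
  fixes s t r :: real
  assumes "0 \<le> s" "s \<le> t" "0 \<le> r"
  shows "s / (s + r) \<le> t / (t + r)"
proof (cases "s + r = 0")
  case False
  then have "0 < s + r" "0 < t + r" using assms by linarith+
  moreover have "s * (t + r) \<le> t * (s + r)"
    using mult_left_mono[OF \<open>s \<le> t\<close> \<open>0 \<le> r\<close>] by (simp add: algebra_simps)
  ultimately show ?thesis by (simp add: divide_le_eq le_divide_eq)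
qed (use assms in simp)

lemma ratio_triangle:
  fixes a b c p q r :: real
  assumes "0 \<le> a" "0 \<le> b" "0 \<le> c" "0 \<le> p" "0 \<le> q" "0 \<le> r"
    and "c \<le> a + b" "p \<le> r + b" "q \<le> r + a"
  shows "c / (c + r) \<le> a / (a + p) + b / (b + q)"
proof -
  have "c / (c + r) \<le> (a + b) / (a + b + r)"
    using assms by (intro divide_add_mono_left) auto
  also have "\<dots> = a / (a + b + r) + b / (a + b + r)" by (simp add: add_divide_distrib)
  also have "\<dots> \<le> a / (a + p) + b / (b + q)"
  proof (rule add_mono)
    show "a / (a + b + r) \<le> a / (a + p)"
      using assms by (cases "a = 0") (auto intro!: divide_left_mono)
    show "b / (a + b + r) \<le> b / (b + q)"
      using assms by (cases "b = 0") (auto intro!: divide_left_mono)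
  qed
  finally show ?thesis .
qed

lemma is_metric_on_ratio:
  assumes d: "is_metric_on M d"
    and s_nonneg: "\<And>x y. x \<in> M \<Longrightarrow> y \<in> M \<Longrightarrow> 0 \<le> s x y"
    and s_sym: "\<And>x y. x \<in> M \<Longrightarrow> y \<in> M \<Longrightarrow> s x y = s y x"
    and s_lipschitz: "\<And>x y z. x \<in> M \<Longrightarrow> y \<in> M \<Longrightarrow> z \<in> M \<Longrightarrow> s x y \<le> s x z + d y z"
  shows "is_metric_on M (\<lambda>x y. d x y / (d x y + s x y))"
  unfolding is_metric_on_def
proof (intro conjI ballI impI)
  fix a assume "a \<in> M"
  with d show "d a a / (d a a + s a a) = 0" unfolding is_metric_on_def by simp
next
  fix a b assume "a \<in> M" "b \<in> M" "a \<noteq> b"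
  with d s_nonneg show "0 < d a b / (d a b + s a b)"
    unfolding is_metric_on_def by (simp add: add_pos_nonneg)
next
  fix a b assume "a \<in> M" "b \<in> M"
  with d s_sym show "d a b / (d a b + s a b) = d b a / (d b a + s b a)"
    unfolding is_metric_on_def by simp
next
  fix a b c assume M: "a \<in> M" "b \<in> M" "c \<in> M"
  have "s b c \<le> s a c + d a b"
    using s_lipschitz[of c b a] s_sym M d unfolding is_metric_on_def by simp
  with M show "d a c / (d a c + s a c) \<le> d a b / (d a b + s a b) + d b c / (d b c + s b c)"
    using d s_nonneg s_lipschitz[of a b c]
    by (intro ratio_triangle) (auto simp: is_metric_on_def is_metric_on_nonneg)
qed

lemma norm1_zero [simp]: "norm1 0 = 0"
  by (simp add: norm1_def)

lemma norm1_pos: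
  assumes "x \<noteq> 0"
  shows "0 < norm1 x"
proof -
  obtain i where "x $ i \<noteq> 0" using assms by (auto simp: vec_eq_iff)
  then show ?thesis unfolding norm1_def by (intro sum_pos2[where i = i]) auto
qed

lemma norm1_triangle: "norm1 (x + y) \<le> norm1 x + norm1 y"
  unfolding norm1_def sum.distrib[symmetric] by (rule sum_mono) (simp add: abs_triangle_ineq)

lemma norm1_minus_commute: "norm1 (x - y) = norm1 (y - x)"
  unfolding norm1_def by (simp add: abs_minus_commute)

lemma is_metric_on_norm1_dist: "is_metric_on M (\<lambda>x y. norm1 (x - y))"
  unfolding is_metric_on_def
proof (intro conjI ballI impI)
  fix x y z :: "real ^ 'n"
  show "norm1 (x - x) = 0" by simp
  show "x \<noteq> y \<Longrightarrow> 0 < norm1 (x - y)" by (simp add: norm1_pos)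
  show "norm1 (x - y) = norm1 (y - x)" by (rule norm1_minus_commute)
  show "norm1 (x - z) \<le> norm1 (x - y) + norm1 (y - z)"
    using norm1_triangle[of "x - y" "y - z"] by simp
qed

definition sum_min :: "real ^ 'n \<Rightarrow> real ^ 'n \<Rightarrow> real" where
  "sum_min x y = (\<Sum>i\<in>UNIV. min (x $ i) (y $ i))"

lemma unit_cube_nonneg: "x \<in> unit_cube \<Longrightarrow> 0 \<le> x $ i"
  and unit_cube_le_one: "x \<in> unit_cube \<Longrightarrow> x $ i \<le> 1"
  by (auto simp: unit_cube_def)

lemma unit_cube_vec: "0 \<le> c \<Longrightarrow> c \<le> 1 \<Longrightarrow> vec c \<in> unit_cube"
  by (simp add: unit_cube_def)

lemma sum_min_nonneg: "x \<in> unit_cube \<Longrightarrow> y \<in> unit_cube \<Longrightarrow> 0 \<le> sum_min x y"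
  unfolding sum_min_def by (intro sum_nonneg) (simp add: unit_cube_nonneg)

lemma sum_min_commute: "sum_min x y = sum_min y x"
  by (simp add: sum_min_def min.commute)

lemma sum_min_lipschitz: "sum_min x y \<le> sum_min x z + norm1 (y - z)"
  unfolding sum_min_def norm1_def sum.distrib[symmetric] by (rule sum_mono) (auto simp: min_def)

lemma sum_min_self_pos: "x \<in> unit_cube \<Longrightarrow> x \<noteq> 0 \<Longrightarrow> 0 < sum_min x x"
  using norm1_pos[of x] by (simp add: sum_min_def norm1_def unit_cube_nonneg)

lemma ip_nonneg: "x \<in> unit_cube \<Longrightarrow> y \<in> unit_cube \<Longrightarrow> 0 \<le> ip x y"
  unfolding ip_def by (intro sum_nonneg) (simp add: unit_cube_nonneg)

lemma ip_commute: "ip x y = ip y x"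
  by (simp add: ip_def mult.commute)

lemma ip_lipschitz:
  assumes "x \<in> unit_cube"
  shows "ip x y \<le> ip x z + norm1 (y - z)"
  unfolding ip_def norm1_def sum.distrib[symmetric]
proof (rule sum_mono)
  fix i
  have x: "0 \<le> x $ i" "x $ i \<le> 1" using assms by (simp_all add: unit_cube_nonneg unit_cube_le_one)
  have "x $ i * (y $ i - z $ i) \<le> x $ i * \<bar>y $ i - z $ i\<bar>"
    using x by (intro mult_left_mono) auto
  also have "\<dots> \<le> \<bar>y $ i - z $ i\<bar>"
    using x by (simp add: mult_left_le_one_le)
  finally show "x $ i * y $ i \<le> x $ i * z $ i + \<bar>(y - z) $ i\<bar>"
    by (simp add: algebra_simps)
qed

lemma ip_self_pos:
  assumes "x \<noteq> 0"
  shows "0 < ip x x"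
proof -
  obtain i where "x $ i \<noteq> 0" using assms by (auto simp: vec_eq_iff)
  then show ?thesis unfolding ip_def by (intro sum_pos2[where i = i]) (auto simp: zero_less_mult_iff)
qed

lemma dJML1_eq_ratio:
  assumes "x \<in> unit_cube" "y \<in> unit_cube"
  shows "dJML1 x y = norm1 (x - y) / (norm1 (x - y) + sum_min x y)"
proof (cases "x = 0 \<and> y = 0")
  case True
  \<comment> \<open>the right-hand side is \<open>0 / 0 = 0\<close>, matching the convention at the origin\<close>
  then show ?thesis by (simp add: dJML1_def)
next
  case False
  have sum_min_eq: "norm1 x + norm1 y - norm1 (x - y) = 2 * sum_min x y"
    unfolding norm1_def sum_min_def sum_distrib_left sum.distrib[symmetric] sum_subtractf[symmetric]
    using assms by (intro sum.cong) (auto simp: min_def unit_cube_nonneg)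
  have "0 < norm1 (x - y) + sum_min x y"
  proof (cases "x = y")
    case True
    with False assms show ?thesis by (simp add: sum_min_self_pos)
  qed (simp add: add_pos_nonneg norm1_pos sum_min_nonneg assms)
  moreover have "norm1 x + norm1 y + norm1 (x - y) = 2 * (norm1 (x - y) + sum_min x y)"
    using sum_min_eq by simp
  ultimately show ?thesis
    using False unfolding dJML1_def sum_min_eq by (simp add: divide_simps)
qed

lemma dJML2_eq_ratio:
  assumes "x \<in> unit_cube" "y \<in> unit_cube"
  shows "dJML2 x y = norm1 (x - y) / (norm1 (x - y) + ip x y)"
proof (cases "x = 0 \<and> y = 0")
  case True
  then show ?thesis by (simp add: dJML2_def)
next
  case False
  have "0 < norm1 (x - y) + ip x y"
  proof (cases "x = y")
    case True
    with False show ?thesis by (simp add: ip_self_pos)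
  qed (simp add: add_pos_nonneg norm1_pos ip_nonneg assms)
  with False show ?thesis
    unfolding dJML2_def by (simp add: divide_simps add.commute)
qed

lemma norm1_vec: "norm1 (vec a :: real ^ 'n) = CARD('n) * \<bar>a\<bar>" for a :: real
  by (simp add: norm1_def)

lemma sqnorm2_vec: "sqnorm2 (vec a :: real ^ 'n) = CARD('n) * a\<^sup>2" for a :: real
  by (simp add: sqnorm2_def)

lemma ip_vec: "ip (vec a :: real ^ 'n) (vec b) = CARD('n) * (a * b)" for a b :: real
  by (simp add: ip_def)

lemma dSJL1_vec:
  fixes a b :: real
  assumes "0 < a" "0 < b"
  shows "dSJL1 (vec a :: real ^ 'n) (vec b) = 1 - a * b / (a + b - a * b)"
  using assms by (simp add: dSJL1_def norm1_vec ip_vec vec_eq_iff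
      distrib_left[symmetric] right_diff_distrib[symmetric])

lemma dSJL2_vec:
  fixes a b :: real
  assumes "0 < a" "0 < b"
  shows "dSJL2 (vec a :: real ^ 'n) (vec b) = 1 - a * b / (a\<^sup>2 + b\<^sup>2 - a * b)"
  using assms by (simp add: dSJL2_def sqnorm2_vec ip_vec vec_eq_iff
      distrib_left[symmetric] right_diff_distrib[symmetric])

theorem theorem1:
  shows "is_metric_on (unit_cube :: (real ^ 'n) set) dJML1 \<and>
         is_metric_on (unit_cube :: (real ^ 'n) set) dJML2 \<and>
         \<not> is_metric_on (unit_cube :: (real ^ 'n) set) dSJL1 \<and>
         \<not> is_metric_on (unit_cube :: (real ^ 'n) set) dSJL2"
proof (intro conjI)
  show "is_metric_on (unit_cube :: (real ^ 'n) set) dJML1"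
    by (subst is_metric_on_cong[OF dJML1_eq_ratio], assumption+)
      (intro is_metric_on_ratio is_metric_on_norm1_dist;
        simp add: sum_min_nonneg sum_min_commute sum_min_lipschitz)
  show "is_metric_on (unit_cube :: (real ^ 'n) set) dJML2"
    by (subst is_metric_on_cong[OF dJML2_eq_ratio], assumption+)
      (intro is_metric_on_ratio is_metric_on_norm1_dist;
        simp add: ip_nonneg ip_commute ip_lipschitz)
  have half: "vec (1/2) \<in> (unit_cube :: (real ^ 'n) set)"
    and quarter: "vec (1/4) \<in> (unit_cube :: (real ^ 'n) set)"
    and eighth: "vec (1/8) \<in> (unit_cube :: (real ^ 'n) set)"
    by (intro unit_cube_vec; simp)+
  have "dSJL1 (vec (1/2) :: real ^ 'n) (vec (1/2)) \<noteq> 0"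
    by (simp add: dSJL1_vec)
  with half show "\<not> is_metric_on (unit_cube :: (real ^ 'n) set) dSJL1"
    unfolding is_metric_on_def by blast
  have "dSJL2 (vec (1/2) :: real ^ 'n) (vec (1/8))
        > dSJL2 (vec (1/2) :: real ^ 'n) (vec (1/4)) + dSJL2 (vec (1/4) :: real ^ 'n) (vec (1/8))"
    by (simp add: dSJL2_vec power2_eq_square)
  with half quarter eighth show "\<not> is_metric_on (unit_cube :: (real ^ 'n) set) dSJL2"
    unfolding is_metric_on_def by (meson not_le)
qed

end
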